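(* With $U_0,\Omega'_0,y,\Upsilon_y,S_1,S_2$ as in the context, one has on $\mathbb{K}^E$ $$dS_1\wedge dS_2=2\sin\Upsilon_y\,e^{-4U_0}\,d\Omega'_0\wedge\star d\Omega'_0,$$ and consequently the one-form $\mathbf{T}_1=\frac{1}{2\rho}S_1\star dS_2$ satisfies $$d(\rho\star\mathbf{T}_1)+\sin\Upsilon_y\,e^{-4U_0}\,d\Omega'_0\wedge\star d\Omega'_0=0,$$ i.e. the associated axially symmetric vector field $\vec T_1=T_1^\rho\partial_\rho+T_1^z\partial_z$ satisfies $\nabla_aT_1^a=-\psi_y\,e^{-4U_0}(d\Omega'_0,d\Omega'_0)_\gamma$ on $D_0$ off the axis, where $\psi_y=1/\sqrt{\rho^2+(z-y)^2}$.
   Context: Let $\mathbb{E}^3$ have cylindrical coordinates $(\rho,z,\phi)$ and flat metric $\gamma=d\rho^2+dz^2+\rho^2d\phi^2$, with covariant derivative $\nabla$. Let $\Sigma_0$ be a $C^1$ axially symmetric surface diffeomorphic to a 2-sphere, given by $\{\rho=\rho_0(\mu),z=z_0(\mu),\phi=\varphi\}$, $\mu\in[\mu_S,\mu_N]$, with $\mu_S<\mu_N$ the only zeros of $\rho_0$ and $z_S:=z_0(\mu_S)<z_N:=z_0(\mu_N)$; $D_0$ is its unbounded exterior region. A function $f$ on $D_0$ is regular if it is $C^2$ on $D_0$, has a $C^1$ extension to $D_0\cup\Sigma_0$, and $rf$ is bounded ($r=\sqrt{\rho^2+z^2}$). $\mathbb{K}=\{(\rho,z):\rho\ge0\}$ carries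 the metric $d\rho^2+dz^2$ and Hodge star with $\star d\rho=-dz$, $\star dz=d\rho$; axially symmetric functions and one-forms $T^\rho d\rho+T^zdz$ are identified with objects on $\mathbb{K}$; $\mathbb{K}^E$ is the projection of $D_0$. $U_0$ is an axially symmetric regular flat-harmonic function on $D_0$ and $\Omega'_0$ an axially symmetric regular solution of $\triangle_\gamma\Omega'_0-4(d\Omega'_0,dU_0)_\gamma=0$. For $y\in(z_S,z_N)$: $\cos\Upsilon_y=(z-y)/\sqrt{\rho^2+(z-y)^2}$, $\sin\Upsilon_y=\rho/\sqrt{\rho^2+(z-y)^2}$; $Z_y$ is the solution of $dZ_y=\cos\Upsilon_y\,dU_0+\sin\Upsilon_y\star dU_0$ vanishing at infinity; $S_1,S_2$ are the solutions vanishing at infinity of $dS_1=e^{-2U_0+2Z_y}[-(1+\cos\Upsilon_y)d\Omega'_0-\sin\Upsilon_y\star d\Omega'_0]$ and $dS_2=e^{-2U_0-2Z_y}[(1-\cos\Upsilon_y)d\Omega'_0-\sin\Upsilon_y\star d\Omega'_0]$. *)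

theory Defs
  imports "HOL-Analysis.Analysis"
begin

text \<open>An axially symmetric one-form T^rho d rho + T^z dz is represented by the pair
  (T^rho, T^z) :: real \<times> real.  Points of K are pairs (rho, z).\<close>

definition hodgeK :: "real \<times> real \<Rightarrow> real \<times> real" where
  "hodgeK w = (snd w, - fst w)"   \<comment> \<open>star d rho = - dz, star dz = d rho\<close>

definition wedgeK :: "real \<times> real \<Rightarrow> real \<times> real \<Rightarrow> real" where
  "wedgeK v w = fst v * snd w - snd v * fst w"  \<comment> \<open>coefficient of d rho /\ dz\<close>

definition dK :: "(real \<times> real) set \<Rightarrow> (real \<times> real \<Rightarrow> real) \<Rightarrow> real \<times> real \<Rightarrow> real \<times> real" where
  "dK A f p = (frechet_derivative f (at p within A) (1, 0),
               frechet_derivative f (at p within A) (0, 1))"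

definition d1K :: "(real \<times> real) set \<Rightarrow> (real \<times> real \<Rightarrow> real \<times> real) \<Rightarrow> real \<times> real \<Rightarrow> real" where
  "d1K A T p = frechet_derivative (\<lambda>q. snd (T q)) (at p within A) (1, 0)
             - frechet_derivative (\<lambda>q. fst (T q)) (at p within A) (0, 1)"
  \<comment> \<open>d(a d rho + b dz) = (b_rho - a_z) d rho /\ dz\<close>

definition cosUps :: "real \<Rightarrow> real \<times> real \<Rightarrow> real" where
  "cosUps y p = (snd p - y) / sqrt ((fst p)\<^sup>2 + (snd p - y)\<^sup>2)"

definition sinUps :: "real \<Rightarrow> real \<times> real \<Rightarrow> real" where
  "sinUps y p = fst p / sqrt ((fst p)\<^sup>2 + (snd p - y)\<^sup>2)"

definition psiY :: "real \<Rightarrow> real \<times> real \<Rightarrow> real" where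
  "psiY y p = 1 / sqrt ((fst p)\<^sup>2 + (snd p - y)\<^sup>2)"

type_synonym R3 = "real \<times> real \<times> real"

definition cylRho :: "R3 \<Rightarrow> real" where
  "cylRho q = sqrt ((fst q)\<^sup>2 + (fst (snd q))\<^sup>2)"

definition proj :: "R3 \<Rightarrow> real \<times> real" where
  "proj q = (cylRho q, snd (snd q))"

definition lift :: "(real \<times> real \<Rightarrow> real) \<Rightarrow> R3 \<Rightarrow> real" where
  "lift f q = f (proj q)"

text \<open>Axially symmetric vector field T^rho d_rho + T^z d_z, in Cartesian components
  (defined off the axis).\<close>
definition liftVec :: "(real \<times> real \<Rightarrow> real \<times> real) \<Rightarrow> R3 \<Rightarrow> R3" where
  "liftVec T q = (fst (T (proj q)) * fst q / cylRho q,
                  fst (T (proj q)) * fst (snd q) / cylRho q,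
                  snd (T (proj q)))"

definition pd3 :: "R3 \<Rightarrow> (R3 \<Rightarrow> real) \<Rightarrow> R3 \<Rightarrow> real" where
  "pd3 i g q = frechet_derivative g (at q) i"

definition lap3 :: "(R3 \<Rightarrow> real) \<Rightarrow> R3 \<Rightarrow> real" where
  "lap3 g q = (\<Sum>i\<in>Basis. pd3 i (pd3 i g) q)"

definition gammaProd :: "(R3 \<Rightarrow> real) \<Rightarrow> (R3 \<Rightarrow> real) \<Rightarrow> R3 \<Rightarrow> real" where
  "gammaProd f g q = (\<Sum>i\<in>Basis. pd3 i f q * pd3 i g q)"

definition div3 :: "(R3 \<Rightarrow> R3) \<Rightarrow> R3 \<Rightarrow> real" where
  "div3 F q = (\<Sum>i\<in>Basis. frechet_derivative F (at q) i \<bullet> i)"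

definition C1_on3 :: "R3 set \<Rightarrow> (R3 \<Rightarrow> real) \<Rightarrow> bool" where
  "C1_on3 A g \<longleftrightarrow> (\<forall>q\<in>A. g differentiable (at q)) \<and> (\<forall>i\<in>Basis. continuous_on A (pd3 i g))"

definition C2_on3 :: "R3 set \<Rightarrow> (R3 \<Rightarrow> real) \<Rightarrow> bool" where
  "C2_on3 A g \<longleftrightarrow> C1_on3 A g \<and> (\<forall>i\<in>Basis. C1_on3 A (pd3 i g))"

definition regular3 :: "R3 set \<Rightarrow> R3 set \<Rightarrow> (R3 \<Rightarrow> real) \<Rightarrow> bool" where
  "regular3 D Sig f \<longleftrightarrow> C2_on3 D f
     \<and> (\<exists>g. (\<forall>q\<in>D. g q = f q) \<and> continuous_on (D \<union> Sig) g
            \<and> (\<forall>i\<in>Basis. \<exists>h. continuous_on (D \<union> Sig) h \<and> (\<forall>q\<in>D. h q = pd3 i f q)))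
     \<and> bounded ((\<lambda>q. norm q * f q) ` D)"

definition Sigma0 :: "(real \<Rightarrow> real) \<Rightarrow> (real \<Rightarrow> real) \<Rightarrow> real \<Rightarrow> real \<Rightarrow> R3 set" where
  "Sigma0 rho0 z0 muS muN =
     {(rho0 mu * cos phi, rho0 mu * sin phi, z0 mu) | mu phi. muS \<le> mu \<and> mu \<le> muN}"

definition exteriorD :: "R3 set \<Rightarrow> R3 set" where
  "exteriorD Sig = \<Union> {C \<in> components (- Sig). \<not> bounded C}"

definition KE :: "R3 set \<Rightarrow> (real \<times> real) set" where
  "KE D = {p. 0 \<le> fst p \<and> (fst p, 0, snd p) \<in> D}"

end

theory Submission
  imports Defs
begin

text \<open>
  Pointwise, \<open>dS\<^sub>1\<close> and \<open>dS\<^sub>2\<close> are combinations of \<open>w = d\<Omega>'\<^sub>0\<close> and \<open>\<star>w\<close>, so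
  \<open>dS\<^sub>1 \<and> dS\<^sub>2\<close> is pure algebra: \<open>w \<and> w\<close> and \<open>\<star>w \<and> \<star>w\<close> vanish, \<open>\<star>w \<and> w = - w \<and> \<star>w\<close>
  makes the \<open>cos \<Upsilon>\<^sub>y\<close> terms cancel, and \<open>Z\<^sub>y\<close> cancels in \<open>e\<^sup>-\<^sup>2\<^sup>U\<^sup>+\<^sup>2\<^sup>Z e\<^sup>-\<^sup>2\<^sup>U\<^sup>-\<^sup>2\<^sup>Z = e\<^sup>-\<^sup>4\<^sup>U\<close>.

  Since \<open>\<star>\<star> = -1\<close>, \<open>\<rho> \<star>T\<^sub>1 = - S\<^sub>1 dS\<^sub>2 / 2\<close>, so \<open>d(\<rho> \<star>T\<^sub>1) = - dS\<^sub>1 \<and> dS\<^sub>2 / 2\<close> as soon as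
  \<open>d(dS\<^sub>2) = 0\<close>. The latter is the symmetry of the second derivatives of \<open>S\<^sub>2\<close>: Schwarz's theorem
  for the \<open>C\<^sup>2\<close> lift of \<open>S\<^sub>2\<close> to \<open>E\<^sup>3\<close>, restricted to the meridian half-plane \<open>\<phi> = 0\<close>.

  For an axially symmetric field, \<open>\<nabla>\<^sub>a T\<^sup>a = \<rho>\<^sup>-\<^sup>1 (\<partial>\<^sub>\<rho>(\<rho> T\<^sup>\<rho>) + \<partial>\<^sub>z(\<rho> T\<^sup>z)) = - \<rho>\<^sup>-\<^sup>1 d(\<rho> \<star>T)\<close>.
  The exterior \<open>D\<^sub>0\<close> is invariant under rotations about the axis, so every off-axis point of
  \<open>D\<^sub>0\<close> projects into \<open>K\<^sup>E\<close>, and \<open>sin \<Upsilon>\<^sub>y = \<rho> \<psi>\<^sub>y\<close>, \<open>w \<and> \<star>w = - |w|\<^sup>2\<close> give the divergence.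
\<close>

section \<open>Symmetry of mixed partial derivatives\<close>

lemma has_derivative_along_line:
  fixes g :: "'a::real_normed_vector \<Rightarrow> real"
  assumes "g differentiable (at (a + s *\<^sub>R u))"
  shows "((\<lambda>s. g (a + s *\<^sub>R u)) has_derivative
           (\<lambda>d. d * frechet_derivative g (at (a + s *\<^sub>R u)) u)) (at s within T)"
proof -
  let ?g' = "frechet_derivative g (at (a + s *\<^sub>R u))"
  have line: "((\<lambda>s. a + s *\<^sub>R u) has_derivative (\<lambda>d. d *\<^sub>R u)) (at s within T)"
    by (auto intro!: derivative_eq_intros)
  have g: "(g has_derivative ?g') (at (a + s *\<^sub>R u))"
    using assms frechet_derivative_works by blast
  have "((\<lambda>s. g (a + s *\<^sub>R u)) has_derivative (\<lambda>d. ?g' (d *\<^sub>R u))) (at s within T)"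
    using has_derivative_compose[OF line g] by (simp add: o_def)
  moreover have "(\<lambda>d. ?g' (d *\<^sub>R u)) = (\<lambda>d. d * ?g' u)"
    using has_derivative_linear[OF g] by (simp add: linear_scale)
  ultimately show ?thesis by simp
qed

lemma second_difference_mean_value:
  fixes g :: "'a::real_normed_vector \<Rightarrow> real"
  assumes h: "0 < h"
    and box: "\<And>s t. 0 \<le> s \<Longrightarrow> s \<le> h \<Longrightarrow> 0 \<le> t \<Longrightarrow> t \<le> h \<Longrightarrow> x + s *\<^sub>R u + t *\<^sub>R v \<in> A"
    and dg: "\<And>y. y \<in> A \<Longrightarrow> g differentiable (at y)"
    and dgu: "\<And>y. y \<in> A \<Longrightarrow> (\<lambda>z. frechet_derivative g (at z) u) differentiable (at y)"
  obtains s t where "0 \<le> s" "s \<le> h" "0 \<le> t" "t \<le> h"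
    "g (x + h *\<^sub>R u + h *\<^sub>R v) - g (x + h *\<^sub>R u) - g (x + h *\<^sub>R v) + g x
       = h * h * frechet_derivative (\<lambda>z. frechet_derivative g (at z) u) (at (x + s *\<^sub>R u + t *\<^sub>R v)) v"
proof -
  define Du where "Du z = frechet_derivative g (at z) u" for z
  define k where "k s = g ((x + h *\<^sub>R v) + s *\<^sub>R u) - g (x + s *\<^sub>R u)" for s
  have "(k has_derivative (\<lambda>d. d * (Du ((x + h *\<^sub>R v) + s *\<^sub>R u) - Du (x + s *\<^sub>R u)))) (at s within {0..h})"
    if "0 \<le> s" "s \<le> h" for s
  proof -
    have "g differentiable (at ((x + h *\<^sub>R v) + s *\<^sub>R u))" "g differentiable (at (x + s *\<^sub>R u))"
      using dg box[of s h] box[of s 0] that h by (simp_all add: algebra_simps)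
    from has_derivative_diff[OF has_derivative_along_line[OF this(1)] has_derivative_along_line[OF this(2)]]
    show ?thesis
      unfolding k_def Du_def by (simp add: algebra_simps)
  qed
  then obtain s where s: "0 < s" "s < h"
    and ks: "k h - k 0 = h * (Du ((x + h *\<^sub>R v) + s *\<^sub>R u) - Du (x + s *\<^sub>R u))"
    using mvt_simple[OF h, of k "\<lambda>s d. d * (Du ((x + h *\<^sub>R v) + s *\<^sub>R u) - Du (x + s *\<^sub>R u))"]
    by auto
  define m where "m t = Du ((x + s *\<^sub>R u) + t *\<^sub>R v)" for t
  have "(m has_derivative (\<lambda>d. d * frechet_derivative Du (at ((x + s *\<^sub>R u) + t *\<^sub>R v)) v)) (at t within {0..h})"
    if "0 \<le> t" "t \<le> h" for t
    unfolding m_def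
    by (rule has_derivative_along_line) (use dgu box[of s t] s that in \<open>simp add: Du_def\<close>)
  then obtain t where t: "0 < t" "t < h"
    and mt: "m h - m 0 = h * frechet_derivative Du (at ((x + s *\<^sub>R u) + t *\<^sub>R v)) v"
    using mvt_simple[OF h, of m "\<lambda>t d. d * frechet_derivative Du (at ((x + s *\<^sub>R u) + t *\<^sub>R v)) v"]
    by auto
  have "g (x + h *\<^sub>R u + h *\<^sub>R v) - g (x + h *\<^sub>R u) - g (x + h *\<^sub>R v) + g x = k h - k 0"
    unfolding k_def by (simp add: algebra_simps)
  also have "\<dots> = h * (m h - m 0)"
    unfolding ks m_def by (simp add: algebra_simps)
  also have "\<dots> = h * h * frechet_derivative Du (at (x + s *\<^sub>R u + t *\<^sub>R v)) v"
    unfolding mt by simp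
  finally show ?thesis
    using that[of s t] s t unfolding Du_def by simp
qed

text \<open>By the mean value theorem, applied twice, the second difference of \<open>g\<close>
  over a small square is \<open>h\<^sup>2\<close> times either mixed partial at some point of the square; continuity
  at \<open>x\<close> then forces the two mixed partials to agree.\<close>

lemma frechet_derivative_mixed_commute:
  fixes g :: "'a::real_normed_vector \<Rightarrow> real"
  assumes A: "open A" "x \<in> A"
    and dg: "\<And>y. y \<in> A \<Longrightarrow> g differentiable (at y)"
    and dgu: "\<And>y. y \<in> A \<Longrightarrow> (\<lambda>z. frechet_derivative g (at z) u) differentiable (at y)"
    and dgv: "\<And>y. y \<in> A \<Longrightarrow> (\<lambda>z. frechet_derivative g (at z) v) differentiable (at y)"
    and cuv: "continuous (at x) (\<lambda>y. frechet_derivative (\<lambda>z. frechet_derivative g (at z) u) (at y) v)"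
    and cvu: "continuous (at x) (\<lambda>y. frechet_derivative (\<lambda>z. frechet_derivative g (at z) v) (at y) u)"
  shows "frechet_derivative (\<lambda>z. frechet_derivative g (at z) u) (at x) v
       = frechet_derivative (\<lambda>z. frechet_derivative g (at z) v) (at x) u"
proof (rule ccontr)
  define Fuv where "Fuv y = frechet_derivative (\<lambda>z. frechet_derivative g (at z) u) (at y) v" for y
  define Fvu where "Fvu y = frechet_derivative (\<lambda>z. frechet_derivative g (at z) v) (at y) u" for y
  assume "\<not> ?thesis"
  then have e: "\<bar>Fuv x - Fvu x\<bar> / 2 > 0"
    unfolding Fuv_def Fvu_def by simp
  obtain d1 where d1: "d1 > 0" "\<And>y. dist y x < d1 \<Longrightarrow> \<bar>Fuv y - Fuv x\<bar> < \<bar>Fuv x - Fvu x\<bar> / 2"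
    using cuv e unfolding continuous_at_eps_delta Fuv_def dist_real_def by blast
  obtain d2 where d2: "d2 > 0" "\<And>y. dist y x < d2 \<Longrightarrow> \<bar>Fvu y - Fvu x\<bar> < \<bar>Fuv x - Fvu x\<bar> / 2"
    using cvu e unfolding continuous_at_eps_delta Fvu_def dist_real_def by blast
  obtain r where r: "r > 0" "ball x r \<subseteq> A"
    using A open_contains_ball by blast
  define dd where "dd = min r (min d1 d2)"
  define h where "h = dd / (2 * (norm u + norm v + 1))"
  have norms: "norm u + norm v + 1 > 0"
    using norm_ge_zero[of u] norm_ge_zero[of v] by linarith
  have h: "h > 0"
    using r d1 d2 norms unfolding h_def dd_def by simp
  have close: "dist (x + s *\<^sub>R u + t *\<^sub>R v) x < dd"
    if "0 \<le> s" "s \<le> h" "0 \<le> t" "t \<le> h" for s t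
  proof -
    have "dist (x + s *\<^sub>R u + t *\<^sub>R v) x \<le> s * norm u + t * norm v"
      using that norm_triangle_ineq[of "s *\<^sub>R u" "t *\<^sub>R v"] by (simp add: dist_norm)
    also have "\<dots> \<le> h * norm u + h * norm v"
      using that by (intro add_mono mult_right_mono) auto
    also have "\<dots> < h * (2 * (norm u + norm v + 1))"
    proof -
      have "0 \<le> h * norm u" "0 \<le> h * norm v"
        using h by simp_all
      moreover have "h * (2 * (norm u + norm v + 1)) = 2 * (h * norm u) + 2 * (h * norm v) + 2 * h"
        by (simp add: algebra_simps)
      ultimately show ?thesis
        using h by linarith
    qed
    also have "\<dots> = dd"
      unfolding h_def using norms by simp
    finally show ?thesis .
  qed
  have box: "x + s *\<^sub>R u + t *\<^sub>R v \<in> A" if "0 \<le> s" "s \<le> h" "0 \<le> t" "t \<le> h" for s t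
    using close[OF that] r unfolding dd_def by (auto simp: dist_commute subset_iff)
  have box': "x + s *\<^sub>R v + t *\<^sub>R u \<in> A" if "0 \<le> s" "s \<le> h" "0 \<le> t" "t \<le> h" for s t
    using box[of t s] that by (simp add: algebra_simps)
  obtain s t where st: "0 \<le> s" "s \<le> h" "0 \<le> t" "t \<le> h"
    and eq1: "g (x + h *\<^sub>R u + h *\<^sub>R v) - g (x + h *\<^sub>R u) - g (x + h *\<^sub>R v) + g x
                = h * h * Fuv (x + s *\<^sub>R u + t *\<^sub>R v)"
    using second_difference_mean_value[OF h box dg dgu] unfolding Fuv_def by blast
  obtain s' t' where st': "0 \<le> s'" "s' \<le> h" "0 \<le> t'" "t' \<le> h"
    and eq2: "g (x + h *\<^sub>R v + h *\<^sub>R u) - g (x + h *\<^sub>R v) - g (x + h *\<^sub>R u) + g x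
                = h * h * Fvu (x + s' *\<^sub>R v + t' *\<^sub>R u)"
    using second_difference_mean_value[OF h box' dg dgv] unfolding Fvu_def by blast
  have "Fuv (x + s *\<^sub>R u + t *\<^sub>R v) = Fvu (x + s' *\<^sub>R v + t' *\<^sub>R u)"
    using eq1 eq2 h by (simp add: algebra_simps)
  moreover have "\<bar>Fuv (x + s *\<^sub>R u + t *\<^sub>R v) - Fuv x\<bar> < \<bar>Fuv x - Fvu x\<bar> / 2"
    using d1 close[OF st] unfolding dd_def by simp
  moreover have "\<bar>Fvu (x + s' *\<^sub>R v + t' *\<^sub>R u) - Fvu x\<bar> < \<bar>Fuv x - Fvu x\<bar> / 2"
    using d2 close[of t' s'] st' unfolding dd_def by (simp add: algebra_simps)
  ultimately show False
    by (simp add: abs_if split: if_splits)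
qed

lemma pd3_commute:
  assumes A: "open A" "x \<in> A" and g: "C2_on3 A g" and ij: "i \<in> Basis" "j \<in> Basis"
  shows "pd3 j (pd3 i g) x = pd3 i (pd3 j g) x"
proof -
  have C1: "C1_on3 A g" "C1_on3 A (pd3 i g)" "C1_on3 A (pd3 j g)"
    using g ij unfolding C2_on3_def by blast+
  then have diff: "\<And>y. y \<in> A \<Longrightarrow> g differentiable (at y)"
    "\<And>y. y \<in> A \<Longrightarrow> pd3 i g differentiable (at y)"
    "\<And>y. y \<in> A \<Longrightarrow> pd3 j g differentiable (at y)"
    unfolding C1_on3_def by blast+
  have "continuous_on A (pd3 j (pd3 i g))" "continuous_on A (pd3 i (pd3 j g))"
    using C1(2,3) ij unfolding C1_on3_def by blast+
  then have cont: "continuous (at x) (pd3 j (pd3 i g))" "continuous (at x) (pd3 i (pd3 j g))"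
    using A by (simp_all add: continuous_on_eq_continuous_at)
  show ?thesis
    unfolding pd3_def[abs_def]
    by (rule frechet_derivative_mixed_commute[OF A diff[unfolded pd3_def[abs_def]] cont[unfolded pd3_def[abs_def]]])
qed

section \<open>Rotation invariance of the exterior region\<close>

lemma open_exteriorD:
  assumes "closed S"
  shows "open (exteriorD S)"
proof -
  have "open C" if "C \<in> components (- S)" for C
    using open_components[OF _ that] assms by (simp add: open_Compl)
  then show ?thesis
    unfolding exteriorD_def by (intro open_Union) blast
qed

lemma exteriorD_invariant:
  assumes cont: "continuous_on (- S) f" and maps: "f ` (- S) \<subseteq> - S"
    and isometric: "\<And>x. norm (f x) = norm x" and q: "q \<in> exteriorD S"
  shows "f q \<in> exteriorD S"
proof -
  obtain C where C: "C \<in> components (- S)" "\<not> bounded C" "q \<in> C"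
    using q unfolding exteriorD_def by auto
  have CS: "C \<subseteq> - S"
    using C(1) in_components_subset by blast
  have "connected (f ` C)"
    using C(1) CS by (meson connected_continuous_image continuous_on_subset cont in_components_connected)
  then have image: "f ` C \<subseteq> connected_component_set (- S) (f q)"
    using C(3) CS maps by (intro connected_component_maximal) auto
  have "\<not> bounded (f ` C)"
    using C(2) isometric by (auto simp: bounded_iff)
  then have "\<not> bounded (connected_component_set (- S) (f q))"
    using image bounded_subset by blast
  moreover have "f q \<in> - S"
    using C(3) CS maps by blast
  ultimately show ?thesis
    unfolding exteriorD_def by (auto intro!: componentsI)
qed

definition rotz :: "real \<Rightarrow> R3 \<Rightarrow> R3" where
  "rotz t q = (cos t * fst q - sin t * fst (snd q), sin t * fst q + cos t * fst (snd q), snd (snd q))"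

lemma rotz_image_Sigma0: "rotz t ` Sigma0 rho0 z0 muS muN \<subseteq> Sigma0 rho0 z0 muS muN"
proof
  fix x assume "x \<in> rotz t ` Sigma0 rho0 z0 muS muN"
  then obtain mu phi where mu: "muS \<le> mu" "mu \<le> muN"
    and x: "x = rotz t (rho0 mu * cos phi, rho0 mu * sin phi, z0 mu)"
    unfolding Sigma0_def by auto
  have "x = (rho0 mu * cos (phi + t), rho0 mu * sin (phi + t), z0 mu)"
    unfolding x rotz_def by (simp add: cos_add sin_add algebra_simps)
  then show "x \<in> Sigma0 rho0 z0 muS muN"
    unfolding Sigma0_def using mu by blast
qed

lemma rotz_minus_rotz: "rotz (- t) (rotz t q) = q"
proof -
  have "cos t * (cos t * a - sin t * b) + sin t * (sin t * a + cos t * b) = a"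
    "cos t * (sin t * a + cos t * b) - sin t * (cos t * a - sin t * b) = b" for a b
    using sin_cos_squared_add3[of t] by algebra+
  then show ?thesis
    by (cases q) (simp add: rotz_def)
qed

lemma norm_rotz: "norm (rotz t q) = norm q"
proof -
  have "(cos t * a - sin t * b)\<^sup>2 + (sin t * a + cos t * b)\<^sup>2 = a\<^sup>2 + b\<^sup>2" for a b
    using sin_cos_squared_add3[of t] by algebra
  then show ?thesis
    by (cases q) (simp add: rotz_def norm_Pair)
qed

lemma rotz_exteriorD:
  assumes "q \<in> exteriorD (Sigma0 rho0 z0 muS muN)"
  shows "rotz t q \<in> exteriorD (Sigma0 rho0 z0 muS muN)"
proof (rule exteriorD_invariant[OF _ _ norm_rotz assms])
  show "continuous_on (- Sigma0 rho0 z0 muS muN) (rotz t)"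
    unfolding rotz_def by (intro continuous_intros)
  show "rotz t ` (- Sigma0 rho0 z0 muS muN) \<subseteq> - Sigma0 rho0 z0 muS muN"
    using rotz_image_Sigma0[of "- t"] rotz_minus_rotz by fastforce
qed

lemma rotz_onto_meridian:
  assumes "cylRho q \<noteq> 0"
  obtains t where "rotz t q = (cylRho q, 0, snd (snd q))"
proof -
  let ?r = "cylRho q"
  have r: "?r > 0" "?r * ?r = (fst q)\<^sup>2 + (fst (snd q))\<^sup>2"
    using assms unfolding cylRho_def by (auto simp: less_le)
  have "(fst q / ?r)\<^sup>2 + (- fst (snd q) / ?r)\<^sup>2 = ((fst q)\<^sup>2 + (fst (snd q))\<^sup>2) / (?r * ?r)"
    by (simp add: power_divide power2_eq_square add_divide_distrib)
  also have "\<dots> = 1"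
    using r by (simp add: r(2)[symmetric])
  finally have "(fst q / ?r)\<^sup>2 + (- fst (snd q) / ?r)\<^sup>2 = 1" .
  then obtain t where t: "fst q / ?r = cos t" "- fst (snd q) / ?r = sin t"
    by (rule sincos_total_2pi)
  have "cos t * fst q - sin t * fst (snd q) = ?r"
    unfolding t[symmetric] using r by (simp add: field_simps power2_eq_square)
  moreover have "sin t * fst q + cos t * fst (snd q) = 0"
    unfolding t[symmetric] using r by (simp add: field_simps)
  ultimately show ?thesis
    using that unfolding rotz_def by simp
qed

definition meridian :: "R3 set \<Rightarrow> (real \<times> real) set" where
  "meridian D = {p. 0 < fst p \<and> (fst p, 0, snd p) \<in> D}"

lemma meridian_iff_KE: "p \<in> meridian D \<longleftrightarrow> p \<in> KE D \<and> 0 < fst p"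
  unfolding meridian_def KE_def by auto

lemma open_meridian: "open D \<Longrightarrow> open (meridian D)"
proof -
  assume "open D"
  moreover have "meridian D = {p. 0 < fst p} \<inter> (\<lambda>p. (fst p, 0::real, snd p)) -` D"
    unfolding meridian_def by auto
  ultimately show "open (meridian D)"
    by (auto intro!: open_Int open_Collect_less continuous_open_vimage continuous_intros)
qed

lemma at_within_KE:
  assumes "open D" "p \<in> meridian D"
  shows "at p within KE D = at p"
proof -
  have "meridian D \<subseteq> KE D"
    using meridian_iff_KE by blast
  then have "p \<in> interior (KE D)"
    using assms open_meridian interior_maximal by blast
  then show ?thesis
    by (rule at_within_interior)
qed

lemma proj_in_meridian:
  assumes "q \<in> exteriorD (Sigma0 rho0 z0 muS muN)" "cylRho q \<noteq> 0"
  shows "proj q \<in> meridian (exteriorD (Sigma0 rho0 z0 muS muN))"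
proof -
  obtain t where "rotz t q = (cylRho q, 0, snd (snd q))"
    using rotz_onto_meridian assms(2) .
  then have "(cylRho q, 0, snd (snd q)) \<in> exteriorD (Sigma0 rho0 z0 muS muN)"
    using rotz_exteriorD[OF assms(1)] by metis
  moreover have "0 < cylRho q"
    using assms(2) unfolding cylRho_def by (simp add: less_le)
  ultimately show ?thesis
    unfolding meridian_def proj_def by simp
qed

lemma linear_real_pair: "linear L \<Longrightarrow> L h = fst h * L (1, 0) + snd h * (L (0, 1) :: real)"
proof -
  assume L: "linear L"
  have "L h = L (fst h *\<^sub>R (1::real, 0::real) + snd h *\<^sub>R (0, 1))"
    by (cases h) simp
  also have "\<dots> = fst h * L (1, 0) + snd h * L (0, 1)"
    by (simp only: linear_add[OF L] linear_scale[OF L] real_scaleR_def)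
  finally show ?thesis .
qed

lemma has_derivative_real_pair:
  fixes f :: "real \<times> real \<Rightarrow> real"
  assumes "(f has_derivative f') F"
  shows "(f has_derivative (\<lambda>h. fst h * f' (1, 0) + snd h * f' (0, 1))) F"
proof -
  have "f' = (\<lambda>h. fst h * f' (1, 0) + snd h * f' (0, 1))"
    using has_derivative_linear[OF assms] by (intro ext linear_real_pair)
  then show ?thesis
    using assms by simp
qed

lemma dK_eq:
  assumes "at p within K = at p" "(f has_derivative f') (at p)"
  shows "dK K f p = (f' (1, 0), f' (0, 1))"
  using frechet_derivative_at[OF assms(2)] assms(1) by (simp add: dK_def)

lemma dK_has_derivative:
  assumes "at p within K = at p" "f differentiable (at p within K)"
  shows "(f has_derivative (\<lambda>h. fst h * fst (dK K f p) + snd h * snd (dK K f p))) (at p)"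
proof -
  have "(f has_derivative frechet_derivative f (at p)) (at p)"
    using assms frechet_derivative_works by metis
  from has_derivative_real_pair[OF this] show ?thesis
    using assms(1) by (simp add: dK_def)
qed

lemma d1K_eq:
  assumes "at p within K = at p"
    and "((\<lambda>q. fst (W q)) has_derivative A) (at p)" "((\<lambda>q. snd (W q)) has_derivative B) (at p)"
  shows "d1K K W p = B (1, 0) - A (0, 1)"
  using frechet_derivative_at[OF assms(2)] frechet_derivative_at[OF assms(3)] assms(1)
  by (simp add: d1K_def)

lemma cylRho_has_derivative:
  assumes "cylRho q \<noteq> 0"
  shows "(cylRho has_derivative (\<lambda>h. (fst q * fst h + fst (snd q) * fst (snd h)) / cylRho q)) (at q)"
proof -
  have pos: "0 < (fst q)\<^sup>2 + (fst (snd q))\<^sup>2"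
    using assms unfolding cylRho_def by (simp add: add_pos_nonneg less_le sum_power2_eq_zero_iff)
  have "((\<lambda>y. sqrt ((fst y)\<^sup>2 + (fst (snd y))\<^sup>2)) has_derivative
      (\<lambda>h::R3. (2 * fst q * fst h + 2 * fst (snd q) * fst (snd h)) / (2 * cylRho q))) (at q)"
    unfolding cylRho_def using pos by (auto intro!: derivative_eq_intros ext simp: field_simps)
  moreover have "(2 * a + 2 * b) / (2 * s) = (a + b) / s" for a b s :: real
    by (simp add: add_divide_distrib)
  ultimately show ?thesis
    unfolding cylRho_def[abs_def] by (simp add: mult.assoc)
qed

lemma lift_has_derivative:
  assumes f: "(f has_derivative (\<lambda>h. fst h * fr + snd h * fz)) (at (proj q))"
    and q: "cylRho q \<noteq> 0"
  shows "(lift f has_derivative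
           (\<lambda>h. fr * ((fst q * fst h + fst (snd q) * fst (snd h)) / cylRho q) + fz * snd (snd h))) (at q)"
proof -
  have "(proj has_derivative (\<lambda>h. ((fst q * fst h + fst (snd q) * fst (snd h)) / cylRho q, snd (snd h)))) (at q)"
    unfolding proj_def[abs_def] by (intro has_derivative_Pair cylRho_has_derivative[OF q] derivative_intros)
  from has_derivative_compose[OF this f] show ?thesis
    by (simp add: lift_def[abs_def] o_def mult.commute)
qed

lemma sum_Basis_R3: "(\<Sum>i\<in>(Basis :: R3 set). f i) = f (1, 0, 0) + f (0, 1, 0) + f (0, 0, 1)"
proof -
  have Basis: "(Basis :: R3 set) = {(1, 0, 0), (0, 1, 0), (0, 0, 1)}"
    by (auto simp: Basis_prod_def zero_prod_def)
  show ?thesis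
    unfolding Basis by (simp add: add.assoc)
qed

lemma gammaProd_lift_self:
  assumes f: "(f has_derivative (\<lambda>h. fst h * fr + snd h * fz)) (at (proj q))"
    and q: "cylRho q \<noteq> 0"
  shows "gammaProd (lift f) (lift f) q = fr\<^sup>2 + fz\<^sup>2"
proof -
  have "pd3 i (lift f) q = fr * ((fst q * fst i + fst (snd q) * fst (snd i)) / cylRho q) + fz * snd (snd i)" for i
    unfolding pd3_def using frechet_derivative_at[OF lift_has_derivative[OF f q], symmetric] by simp
  then have "gammaProd (lift f) (lift f) q
      = fr\<^sup>2 * (((fst q)\<^sup>2 + (fst (snd q))\<^sup>2) / (cylRho q * cylRho q)) + fz\<^sup>2"
    unfolding gammaProd_def sum_Basis_R3
    by (simp add: power_mult_distrib power_divide add_divide_distrib algebra_simps power2_eq_square)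
  also have "((fst q)\<^sup>2 + (fst (snd q))\<^sup>2) / (cylRho q * cylRho q) = 1"
  proof -
    have "cylRho q * cylRho q = (fst q)\<^sup>2 + (fst (snd q))\<^sup>2"
      unfolding cylRho_def by simp
    moreover have "(fst q)\<^sup>2 + (fst (snd q))\<^sup>2 \<noteq> 0"
      using q unfolding cylRho_def by auto
    ultimately show ?thesis
      by simp
  qed
  finally show ?thesis
    by simp
qed

lemma div3_liftVec_eq:
  assumes a: "((\<lambda>p. fst (T p)) has_derivative (\<lambda>h. fst h * aR + snd h * aZ)) (at (proj q))"
    and b: "((\<lambda>p. snd (T p)) has_derivative (\<lambda>h. fst h * bR + snd h * bZ)) (at (proj q))"
    and q: "cylRho q \<noteq> 0"
  shows "div3 (liftVec T) q = aR + fst (T (proj q)) / cylRho q + bZ"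
proof -
  let ?r = "cylRho q" and ?a = "fst (T (proj q))"
  define rr where "rr h = (fst q * fst h + fst (snd q) * fst (snd h)) / ?r" for h :: R3
  define aa where "aa h = aR * rr h + aZ * snd (snd h)" for h :: R3
  define bb where "bb h = bR * rr h + bZ * snd (snd h)" for h :: R3
  define A where "A y = fst (T (proj y))" for y
  define B where "B y = snd (T (proj y))" for y
  have rho: "(cylRho has_derivative rr) (at q)"
    using cylRho_has_derivative[OF q] unfolding rr_def[abs_def] .
  have dA: "(A has_derivative aa) (at q)"
    using lift_has_derivative[OF a q] unfolding aa_def[abs_def] rr_def lift_def A_def[abs_def] .
  have dB: "(B has_derivative bb) (at q)"
    using lift_has_derivative[OF b q] unfolding bb_def[abs_def] rr_def lift_def B_def[abs_def] .
  have liftVec_T: "liftVec T = (\<lambda>y. (A y * fst y / cylRho y, A y * fst (snd y) / cylRho y, B y))"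
    unfolding liftVec_def A_def B_def by simp
  have D: "(liftVec T has_derivative
     (\<lambda>h. (((aa h * fst q + ?a * fst h) * ?r - ?a * fst q * rr h) / (?r * ?r),
           ((aa h * fst (snd q) + ?a * fst (snd h)) * ?r - ?a * fst (snd q) * rr h) / (?r * ?r),
           bb h))) (at q)"
    unfolding liftVec_T A_def[symmetric]
    using q by (auto intro!: derivative_eq_intros dA dB rho ext simp: algebra_simps)
  have r: "?r > 0" "?r * ?r = (fst q)\<^sup>2 + (fst (snd q))\<^sup>2"
    using q unfolding cylRho_def by (auto simp: less_le)
  show ?thesis
    unfolding div3_def sum_Basis_R3 frechet_derivative_at[OF D, symmetric]
    using r(1) by (simp add: aa_def bb_def rr_def field_simps) (use r(2) in algebra)
qed

lemma cylRho_mult_div3_liftVec: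
  assumes T: "T differentiable (at (proj q))"
    and K: "at (proj q) within K = at (proj q)" and q: "cylRho q \<noteq> 0"
  shows "cylRho q * div3 (liftVec T) q = - d1K K (\<lambda>p. fst p *\<^sub>R hodgeK (T p)) (proj q)"
proof -
  let ?p = "proj q" and ?T' = "frechet_derivative T (at (proj q))"
  have dT: "(T has_derivative ?T') (at ?p)"
    using T frechet_derivative_works by blast
  note a = has_derivative_real_pair[OF has_derivative_fst[OF dT]]
  note b = has_derivative_real_pair[OF has_derivative_snd[OF dT]]
  have "((\<lambda>p. fst (fst p *\<^sub>R hodgeK (T p))) has_derivative
          (\<lambda>h. fst h * snd (T ?p) + fst ?p * (fst h * snd (?T' (1, 0)) + snd h * snd (?T' (0, 1))))) (at ?p)"
    unfolding hodgeK_def using has_derivative_mult[OF has_derivative_fst[OF has_derivative_ident] b]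
    by (simp add: algebra_simps)
  moreover have "((\<lambda>p. snd (fst p *\<^sub>R hodgeK (T p))) has_derivative
          (\<lambda>h. - (fst h * fst (T ?p) + fst ?p * (fst h * fst (?T' (1, 0)) + snd h * fst (?T' (0, 1)))))) (at ?p)"
    unfolding hodgeK_def using has_derivative_minus[OF has_derivative_mult[OF has_derivative_fst[OF has_derivative_ident] a]]
    by (simp add: algebra_simps)
  ultimately have "d1K K (\<lambda>p. fst p *\<^sub>R hodgeK (T p)) ?p
      = - (fst (T ?p) + fst ?p * fst (?T' (1, 0))) - fst ?p * snd (?T' (0, 1))"
    by (simp add: d1K_eq[OF K])
  moreover have "fst ?p = cylRho q"
    by (simp add: proj_def)
  ultimately show ?thesis
    unfolding div3_liftVec_eq[OF a b q] using q by (simp add: distrib_left)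
qed

lemma has_derivative_restrict_meridian:
  fixes f :: "R3 \<Rightarrow> real"
  assumes "f differentiable (at (fst p, 0, snd p))"
  shows "((\<lambda>p. f (fst p, 0, snd p)) has_derivative
           (\<lambda>h. fst h * pd3 (1, 0, 0) f (fst p, 0, snd p) + snd h * pd3 (0, 0, 1) f (fst p, 0, snd p))) (at p)"
proof -
  have "((\<lambda>p. (fst p, 0::real, snd p)) has_derivative (\<lambda>h. (fst h, 0, snd h))) (at p)"
    by (auto intro!: derivative_eq_intros)
  from has_derivative_compose[OF this assms[unfolded frechet_derivative_works]]
  have "((\<lambda>p. f (fst p, 0, snd p)) has_derivative
          (\<lambda>h. frechet_derivative f (at (fst p, 0, snd p)) (fst h, 0, snd h))) (at p)"
    by (simp add: o_def)
  from has_derivative_real_pair[OF this] show ?thesis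
    unfolding pd3_def by simp
qed

lemma dK_has_symmetric_derivative:
  assumes D: "open D" and S: "C2_on3 (D \<inter> {q. cylRho q \<noteq> 0}) (lift S)" and p: "p \<in> meridian D"
  obtains a b c where
    "(dK (KE D) S has_derivative (\<lambda>h. (fst h * a + snd h * b, fst h * b + snd h * c))) (at p)"
proof -
  let ?A = "D \<inter> {q. cylRho q \<noteq> 0}" and ?g = "lift S"
  define e1 :: R3 where "e1 = (1, 0, 0)"
  define e3 :: R3 where "e3 = (0, 0, 1)"
  define emb :: "real \<times> real \<Rightarrow> R3" where "emb p = (fst p, 0, snd p)" for p
  have e: "e1 \<in> Basis" "e3 \<in> Basis"
    unfolding e1_def e3_def by (simp_all add: Basis_prod_def zero_prod_def)
  have A: "open ?A"
    unfolding cylRho_def[abs_def] by (intro open_Int D open_Collect_neq continuous_intros)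
  have emb_A: "emb q \<in> ?A" if "q \<in> meridian D" for q
    using that unfolding meridian_def emb_def cylRho_def by auto
  have C1: "C1_on3 ?A ?g" "C1_on3 ?A (pd3 e1 ?g)" "C1_on3 ?A (pd3 e3 ?g)"
    using S e unfolding C2_on3_def by blast+
  have restrict: "((\<lambda>p. f (emb p)) has_derivative
      (\<lambda>h. fst h * pd3 e1 f (emb q) + snd h * pd3 e3 f (emb q))) (at q)"
    if "C1_on3 ?A f" "q \<in> meridian D" for f q
    unfolding e1_def e3_def emb_def
    by (rule has_derivative_restrict_meridian)
      (use that emb_A[OF that(2)] in \<open>simp add: C1_on3_def emb_def\<close>)
  have dKS: "(pd3 e1 ?g (emb q), pd3 e3 ?g (emb q)) = dK (KE D) S q" if q: "q \<in> meridian D" for q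
  proof -
    have "?g (emb q') = S q'" if "q' \<in> meridian D" for q'
      using that unfolding meridian_def lift_def proj_def emb_def cylRho_def by auto
    from has_derivative_transform_within_open[OF restrict[OF C1(1) q] open_meridian[OF D] q this]
    show ?thesis
      using dK_eq[OF at_within_KE[OF D q]] by simp
  qed
  have "((\<lambda>p. (pd3 e1 ?g (emb p), pd3 e3 ?g (emb p))) has_derivative
      (\<lambda>h. (fst h * pd3 e1 (pd3 e1 ?g) (emb p) + snd h * pd3 e3 (pd3 e1 ?g) (emb p),
            fst h * pd3 e1 (pd3 e3 ?g) (emb p) + snd h * pd3 e3 (pd3 e3 ?g) (emb p)))) (at p)"
    by (intro has_derivative_Pair restrict C1 p)
  from has_derivative_transform_within_open[OF this open_meridian[OF D] p dKS]
  have "(dK (KE D) S has_derivative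
      (\<lambda>h. (fst h * pd3 e1 (pd3 e1 ?g) (emb p) + snd h * pd3 e3 (pd3 e1 ?g) (emb p),
            fst h * pd3 e1 (pd3 e3 ?g) (emb p) + snd h * pd3 e3 (pd3 e3 ?g) (emb p)))) (at p)" .
  moreover have "pd3 e3 (pd3 e1 ?g) (emb p) = pd3 e1 (pd3 e3 ?g) (emb p)"
    using pd3_commute[OF A emb_A[OF p] S e] .
  ultimately show ?thesis
    using that by simp
qed

lemma sinUps_eq_psiY: "sinUps y p = fst p * psiY y p"
  by (simp add: sinUps_def psiY_def)

lemma wedgeK_hodgeK_self: "wedgeK w (hodgeK w) = - ((fst w)\<^sup>2 + (snd w)\<^sup>2)"
  by (simp add: wedgeK_def hodgeK_def power2_eq_square)

lemma wedgeK_dS1_dS2: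
  "wedgeK (exp (- 2 * u + 2 * z) *\<^sub>R (- (1 + c) *\<^sub>R w - s *\<^sub>R hodgeK w))
          (exp (- 2 * u - 2 * z) *\<^sub>R ((1 - c) *\<^sub>R w - s *\<^sub>R hodgeK w))
     = 2 * s * exp (- 4 * u) * wedgeK w (hodgeK w)"
proof -
  have "wedgeK (E1 *\<^sub>R (- (1 + c) *\<^sub>R w - s *\<^sub>R hodgeK w)) (E2 *\<^sub>R ((1 - c) *\<^sub>R w - s *\<^sub>R hodgeK w))
      = 2 * s * (E1 * E2) * wedgeK w (hodgeK w)" for E1 E2
    by (cases w) (simp add: wedgeK_def hodgeK_def algebra_simps)
  moreover have "exp (- 2 * u + 2 * z) * exp (- 2 * u - 2 * z) = exp (- 4 * u)"
    by (simp add: exp_add[symmetric])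
  ultimately show ?thesis
    by (simp only:)
qed

lemma differentiable_inverse_rho_scaleR_hodgeK:
  assumes "fst p \<noteq> 0" "S differentiable (at p)" "W differentiable (at p)"
  shows "(\<lambda>q. (1 / (2 * fst q)) *\<^sub>R (S q *\<^sub>R hodgeK (W q))) differentiable (at p)"
proof -
  have "(\<lambda>q. fst (W q)) differentiable (at p)" "(\<lambda>q. snd (W q)) differentiable (at p)"
    using differentiable_compose[OF bounded_linear_imp_differentiable assms(3)]
      bounded_linear_fst bounded_linear_snd by blast+
  then show ?thesis
    unfolding hodgeK_def using assms(1,2) bounded_linear_imp_differentiable[OF bounded_linear_fst]
    by (auto intro!: derivative_intros)
qed

lemma d1K_rho_hodge_eq_half_wedge:
  assumes p: "fst p \<noteq> 0" and K: "at p within K = at p"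
    and S1: "S1 differentiable (at p within K)"
    and S2: "(dK K S2 has_derivative (\<lambda>h. (fst h * a + snd h * b, fst h * b + snd h * c))) (at p)"
  shows "d1K K (\<lambda>q. fst q *\<^sub>R hodgeK ((1 / (2 * fst q)) *\<^sub>R (S1 q *\<^sub>R hodgeK (dK K S2 q)))) p
       = - wedgeK (dK K S1 p) (dK K S2 p) / 2"
proof -
  let ?W = "\<lambda>q. fst q *\<^sub>R hodgeK ((1 / (2 * fst q)) *\<^sub>R (S1 q *\<^sub>R hodgeK (dK K S2 q)))"
  let ?dS1 = "\<lambda>h. fst h * fst (dK K S1 p) + snd h * snd (dK K S1 p)"
  have dS1: "(S1 has_derivative ?dS1) (at p)"
    using dK_has_derivative[OF K S1] .
  have dS2: "((\<lambda>q. fst (dK K S2 q)) has_derivative (\<lambda>h. fst h * a + snd h * b)) (at p)"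
    "((\<lambda>q. snd (dK K S2 q)) has_derivative (\<lambda>h. fst h * b + snd h * c)) (at p)"
    using has_derivative_fst[OF S2] has_derivative_snd[OF S2] by simp_all
  have open_p: "open {q :: real \<times> real. fst q \<noteq> 0}" "p \<in> {q. fst q \<noteq> 0}"
    using p by (auto intro!: open_Collect_neq continuous_intros)
  have W: "- (1 / 2) * (S1 q * fst (dK K S2 q)) = fst (?W q)"
    "- (1 / 2) * (S1 q * snd (dK K S2 q)) = snd (?W q)" if "q \<in> {q. fst q \<noteq> 0}" for q
    using that by (simp_all add: hodgeK_def)
  note W1 = has_derivative_transform_within_open[OF
      has_derivative_mult_right[where x = "- (1 / 2)", OF has_derivative_mult[OF dS1 dS2(1)]] open_p W(1)]
  note W2 = has_derivative_transform_within_open[OF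
      has_derivative_mult_right[where x = "- (1 / 2)", OF has_derivative_mult[OF dS1 dS2(2)]] open_p W(2)]
  show ?thesis
    using d1K_eq[OF K W1 W2] by (simp add: wedgeK_def algebra_simps)
qed

lemma div3_liftVec_eq_of_d1K:
  assumes T: "T differentiable (at (proj q))"
    and K: "at (proj q) within K = at (proj q)" and q: "cylRho q \<noteq> 0"
    and d_rho_hodge: "d1K K (\<lambda>p. fst p *\<^sub>R hodgeK (T p)) (proj q)
                + sinUps y (proj q) * E * wedgeK w (hodgeK w) = 0"
    and Om: "(Om has_derivative (\<lambda>h. fst h * fst w + snd h * snd w)) (at (proj q))"
  shows "div3 (liftVec T) q = - lift (psiY y) q * E * gammaProd (lift Om) (lift Om) q"
proof -
  have "cylRho q * div3 (liftVec T) q = sinUps y (proj q) * E * wedgeK w (hodgeK w)"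
    using cylRho_mult_div3_liftVec[OF T K q] d_rho_hodge by simp
  also have "\<dots> = cylRho q * (- lift (psiY y) q * E * gammaProd (lift Om) (lift Om) q)"
    unfolding gammaProd_lift_self[OF Om q] wedgeK_hodgeK_self sinUps_eq_psiY
    by (simp add: lift_def proj_def algebra_simps)
  finally show ?thesis
    by (rule mult_left_cancel[OF q, THEN iffD1])
qed

theorem mainTheorem6:
  fixes rho0 z0 :: "real \<Rightarrow> real" and muS muN y :: real
    and U0 Om Z S1 S2 :: "real \<times> real \<Rightarrow> real"
  defines "Sig \<equiv> Sigma0 rho0 z0 muS muN"
  defines "D0 \<equiv> exteriorD Sig"
  defines "K \<equiv> KE D0"
  defines "T1 \<equiv> (\<lambda>p. (1 / (2 * fst p)) *\<^sub>R (S1 p *\<^sub>R hodgeK (dK K S2 p)))"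
  assumes surf_C1: "(\<lambda>mu. (rho0 mu, z0 mu)) C1_differentiable_on {muS..muN}"
    and surf_sphere: "Sig homeomorphic sphere (0::R3) 1"
    and mu_lt: "muS < muN"
    and rho0_ends: "rho0 muS = 0" "rho0 muN = 0"
    and rho0_pos: "\<forall>mu. muS < mu \<and> mu < muN \<longrightarrow> rho0 mu > 0"
    and zS_lt_zN: "z0 muS < z0 muN"
    and y_range: "z0 muS < y" "y < z0 muN"
    and U0_reg: "regular3 D0 Sig (lift U0)"
    and U0_harm: "\<forall>q\<in>D0. lap3 (lift U0) q = 0"
    and Om_reg: "regular3 D0 Sig (lift Om)"
    and Om_eq: "\<forall>q\<in>D0. lap3 (lift Om) q - 4 * gammaProd (lift Om) (lift U0) q = 0"
    and U0_diffK: "\<forall>p\<in>K. U0 differentiable (at p within K)"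
    and Om_diffK: "\<forall>p\<in>K. Om differentiable (at p within K)"
    and Z_eq: "\<forall>p\<in>K. Z differentiable (at p within K) \<and>
                 dK K Z p = cosUps y p *\<^sub>R dK K U0 p + sinUps y p *\<^sub>R hodgeK (dK K U0 p)"
    and Z_inf: "(Z \<longlongrightarrow> 0) (inf at_infinity (principal K))"
    and S1_eq: "\<forall>p\<in>K. S1 differentiable (at p within K) \<and>
                 dK K S1 p = exp (- 2 * U0 p + 2 * Z p) *\<^sub>R
                   (- (1 + cosUps y p) *\<^sub>R dK K Om p - sinUps y p *\<^sub>R hodgeK (dK K Om p))"
    and S1_inf: "(S1 \<longlongrightarrow> 0) (inf at_infinity (principal K))"
    and S2_eq: "\<forall>p\<in>K. S2 differentiable (at p within K) \<and>
                 dK K S2 p = exp (- 2 * U0 p - 2 * Z p) *\<^sub>R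
                   ((1 - cosUps y p) *\<^sub>R dK K Om p - sinUps y p *\<^sub>R hodgeK (dK K Om p))"
    and S2_inf: "(S2 \<longlongrightarrow> 0) (inf at_infinity (principal K))"
    and S_C2: "C2_on3 (D0 \<inter> {q. cylRho q \<noteq> 0}) (lift S1)"
              "C2_on3 (D0 \<inter> {q. cylRho q \<noteq> 0}) (lift S2)"
  shows "(\<forall>p\<in>K. wedgeK (dK K S1 p) (dK K S2 p)
            = 2 * sinUps y p * exp (- 4 * U0 p) * wedgeK (dK K Om p) (hodgeK (dK K Om p)))
       \<and> (\<forall>p\<in>K. 0 < fst p \<longrightarrow>
            d1K K (\<lambda>q. fst q *\<^sub>R hodgeK (T1 q)) p
              + sinUps y p * exp (- 4 * U0 p) * wedgeK (dK K Om p) (hodgeK (dK K Om p)) = 0)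
       \<and> (\<forall>q\<in>D0. cylRho q \<noteq> 0 \<longrightarrow>
            div3 (liftVec T1) q
              = - lift (psiY y) q * exp (- 4 * lift U0 q) * gammaProd (lift Om) (lift Om) q)"
proof -
  have D0: "open D0"
    unfolding D0_def using surf_sphere compact_sphere homeomorphic_compactness
    by (blast intro: open_exteriorD compact_imp_closed)
  have atK: "at p within K = at p" if "p \<in> meridian D0" for p
    using at_within_KE[OF D0 that] unfolding K_def .
  have dS1: "S1 differentiable (at p)" if "p \<in> meridian D0" for p
    using S1_eq that atK[OF that] meridian_iff_KE unfolding K_def by metis
  have wedge: "wedgeK (dK K S1 p) (dK K S2 p)
      = 2 * sinUps y p * exp (- 4 * U0 p) * wedgeK (dK K Om p) (hodgeK (dK K Om p))" if "p \<in> K" for p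
    using S1_eq S2_eq that by (simp only: wedgeK_dS1_dS2)
  have d_rho_hodge_T1: "d1K K (\<lambda>q. fst q *\<^sub>R hodgeK (T1 q)) p = - wedgeK (dK K S1 p) (dK K S2 p) / 2"
    and dT1: "T1 differentiable (at p)" if p: "p \<in> meridian D0" for p
  proof -
    obtain a b c where dS2: "(dK K S2 has_derivative (\<lambda>h. (fst h * a + snd h * b, fst h * b + snd h * c))) (at p)"
      using dK_has_symmetric_derivative[OF D0 S_C2(2) p] unfolding K_def .
    have p0: "fst p \<noteq> 0"
      using p by (simp add: meridian_def)
    show "d1K K (\<lambda>q. fst q *\<^sub>R hodgeK (T1 q)) p = - wedgeK (dK K S1 p) (dK K S2 p) / 2"
      unfolding T1_def
      by (rule d1K_rho_hodge_eq_half_wedge[OF p0 atK[OF p] _ dS2]) (use dS1[OF p] atK[OF p] in simp)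
    show "T1 differentiable (at p)"
      unfolding T1_def using differentiable_inverse_rho_scaleR_hodgeK[OF p0 dS1[OF p] differentiableI[OF dS2]] .
  qed
  have div: "div3 (liftVec T1) q = - lift (psiY y) q * exp (- 4 * lift U0 q) * gammaProd (lift Om) (lift Om) q"
    if q: "q \<in> D0" "cylRho q \<noteq> 0" for q
  proof -
    have p: "proj q \<in> meridian D0"
      using q unfolding D0_def Sig_def by (rule proj_in_meridian)
    then have pK: "proj q \<in> K"
      unfolding K_def meridian_iff_KE by simp
    show ?thesis
      unfolding lift_def[of U0]
      by (rule div3_liftVec_eq_of_d1K[OF dT1[OF p] atK[OF p] q(2)])
        (use d_rho_hodge_T1[OF p] wedge[OF pK] dK_has_derivative[OF atK[OF p]] Om_diffK pK in auto)
  qed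
  show ?thesis
    using wedge d_rho_hodge_T1 div meridian_iff_KE unfolding K_def by auto
qed

end
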